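(* For all integers $r\ge 3$ and $n\ge 1$, $$\max\Bigl\{\alpha\bigl(C_{d,q}^{\boxtimes n}\bigr)\;:\; q,d\in\mathbb N,\ q\ge 2d,\ q/d<r\Bigr\}=\frac{1+r^n(r-2)}{r-1}.$$
   Context: For positive integers $q,d$ with $q\ge 2d$, the circular graph $C_{d,q}$ has vertex set $\mathbb Z_q$, two distinct vertices $x,y$ being adjacent iff $\min\{|x-y|,q-|x-y|\}<d$ (viewing $x,y$ as integers in $\{0,\dots,q-1\}$). For a graph $G=(V,E)$, the strong product power $G^{\boxtimes n}$ has vertex set $V^n$, two distinct vertices $(u_1,\dots,u_n),(v_1,\dots,v_n)$ being adjacent iff for every $i$ either $u_i=v_i$ or $u_iv_i\in E$. $\alpha(G)$ is the maximum size of an independent set (a set of pairwise non-adjacent vertices) of $G$. *)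

theory Defs
  imports Complex_Main
begin

(* A graph is given by a vertex set V and an adjacency relation E (symmetric, irreflexive). *)

definition independent_set :: "'a set \<Rightarrow> ('a \<Rightarrow> 'a \<Rightarrow> bool) \<Rightarrow> 'a set \<Rightarrow> bool" where
  "independent_set V E S \<longleftrightarrow> S \<subseteq> V \<and> (\<forall>x\<in>S. \<forall>y\<in>S. \<not> E x y)"

definition alpha :: "'a set \<Rightarrow> ('a \<Rightarrow> 'a \<Rightarrow> bool) \<Rightarrow> nat" where
  "alpha V E = Max {card S | S. independent_set V E S}"

definition circ_vertices :: "nat \<Rightarrow> nat set" where
  "circ_vertices q = {0..<q}"

definition circ_adj :: "nat \<Rightarrow> nat \<Rightarrow> nat \<Rightarrow> nat \<Rightarrow> bool" where
  "circ_adj d q x y \<longleftrightarrow> x \<noteq> y \<and>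
     min (nat \<bar>int x - int y\<bar>) (q - nat \<bar>int x - int y\<bar>) < d"

(* strong product power G^{\<boxtimes> n}: vertices are lists of length n over V *)
definition strong_pow_vertices :: "'a set \<Rightarrow> nat \<Rightarrow> 'a list set" where
  "strong_pow_vertices V n = {xs. length xs = n \<and> set xs \<subseteq> V}"

definition strong_pow_adj :: "('a \<Rightarrow> 'a \<Rightarrow> bool) \<Rightarrow> 'a list \<Rightarrow> 'a list \<Rightarrow> bool" where
  "strong_pow_adj E us vs \<longleftrightarrow> us \<noteq> vs \<and> length us = length vs \<and>
     (\<forall>i < length us. us ! i = vs ! i \<or> E (us ! i) (vs ! i))"

definition alpha_circ_pow :: "nat \<Rightarrow> nat \<Rightarrow> nat \<Rightarrow> nat" where
  "alpha_circ_pow d q n =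
     alpha (strong_pow_vertices (circ_vertices q) n) (strong_pow_adj (circ_adj d q))"

end

theory Submission
  imports Defs
begin

text \<open>
  Let \<open>F = alpha_bound r\<close>, i.e. \<open>F(0) = 1\<close> and \<open>F(k+1) = r F(k) - 1\<close>, so that
  \<open>(r-1) F(n) = 1 + r^n (r-2)\<close>.

  Upper bound: the \<open>q\<close> arcs of \<open>d\<close> consecutive vertices of \<open>C_{d,q}\<close> are cliques and every
  vertex lies on \<open>d\<close> of them. Splitting an independent set of \<open>C_{d,q}^{\<boxtimes>(n+1)}\<close> according to
  the arc containing its first coordinate gives \<open>d \<alpha>(C^{\<boxtimes>(n+1)}) \<le> q \<alpha>(C^{\<boxtimes>n}) < r d F(n)\<close>
  when \<open>q < r d\<close>, hence \<open>\<alpha>(C^{\<boxtimes>(n+1)}) \<le> F(n+1)\<close> by induction.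

  Lower bound: for \<open>q = F(n)\<close> and \<open>d = F(n-1)\<close>, so \<open>q = r d - 1\<close>, the \<open>q\<close> vectors
  \<open>(t, r t, \<dots>, r^(n-1) t) mod q\<close> are independent, because for every \<open>z \<noteq> 0\<close> in \<open>\<int>/q\<close> some
  \<open>r^k z\<close> with \<open>k < n\<close> is at circular distance at least \<open>d\<close> from \<open>0\<close>.
\<close>

definition circ_dist :: "int \<Rightarrow> int \<Rightarrow> int" where
  "circ_dist N z = min (z mod N) (N - z mod N)"

lemma circ_dist_mod [simp]: "circ_dist N (z mod N) = circ_dist N z"
  by (simp add: circ_dist_def)

lemma circ_dist_0: "N \<ge> 0 \<Longrightarrow> circ_dist N 0 = 0"
  by (simp add: circ_dist_def)

lemma circ_dist_uminus: "N > 0 \<Longrightarrow> circ_dist N (- z) = circ_dist N z"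
  by (auto simp: circ_dist_def zmod_zminus1_eq_if)

lemma circ_dist_eq_min: "0 \<le> u \<Longrightarrow> u < N \<Longrightarrow> circ_dist N u = min u (N - u)"
  by (simp add: circ_dist_def)

lemma circ_dist_le_abs:
  assumes "\<bar>z\<bar> < N" shows "circ_dist N z \<le> \<bar>z\<bar>"
proof (cases "z \<ge> 0")
  case True
  then show ?thesis using assms by (simp add: circ_dist_def)
next
  case False
  then have "(z + N) mod N = z + N"
    using assms by (intro mod_pos_pos_trivial) auto
  then have "z mod N = z + N" by simp
  then show ?thesis using False by (simp add: circ_dist_def)
qed

lemma circ_dist_mult:
  assumes "N > 0" shows "circ_dist N (r * circ_dist N z) = circ_dist N (r * z)"
proof (cases "z mod N \<le> N - z mod N")
  case True
  then show ?thesis by (simp add: circ_dist_def mod_mult_right_eq)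
next
  case False
  have "(r * (N - z mod N)) mod N = ((r * N) mod N - r * (z mod N)) mod N"
    unfolding right_diff_distrib by (rule mod_diff_left_eq[symmetric])
  also have "\<dots> = (- (r * (z mod N))) mod N"
    by simp
  also have "\<dots> = (- (r * z)) mod N"
    by (metis mod_minus_eq mod_mult_right_eq)
  finally have "circ_dist N (r * circ_dist N z) = circ_dist N (- (r * z))"
    using False by (metis circ_dist_def circ_dist_mod min_def)
  then show ?thesis using circ_dist_uminus[OF assms] by simp
qed

lemma circ_adj_iff_circ_dist:
  assumes "x < q" "y < q"
  shows "circ_adj d q x y \<longleftrightarrow> x \<noteq> y \<and> circ_dist (int q) (int x - int y) < int d"
proof -
  have "int (min (nat \<bar>int x - int y\<bar>) (q - nat \<bar>int x - int y\<bar>)) = circ_dist (int q) (int x - int y)"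
  proof (cases "y \<le> x")
    case True
    then have "nat \<bar>int x - int y\<bar> = x - y" by simp
    then show ?thesis using assms True by (simp add: circ_dist_def min_def of_nat_diff) arith
  next
    case False
    have "(int x - int y + int q) mod int q = int x - int y + int q"
      using assms False by (intro mod_pos_pos_trivial) auto
    then have "(int x - int y) mod int q = int x - int y + int q" by simp
    moreover have "nat \<bar>int x - int y\<bar> = y - x" using False by simp
    ultimately show ?thesis using assms False by (simp add: circ_dist_def min_def of_nat_diff) arith
  qed
  then show ?thesis unfolding circ_adj_def by linarith
qed

fun repunit :: "int \<Rightarrow> nat \<Rightarrow> int" where
  "repunit r 0 = 0"
| "repunit r (Suc k) = 1 + r * repunit r k"

lemma repunit_add: "repunit r (a + b) = repunit r a + r ^ a * repunit r b"
  by (induction a) (auto simp: algebra_simps)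

lemma power_sub_repunit_add:
  "r ^ (a + b) - repunit r (a + b) + repunit r a = r ^ a * (r ^ b - repunit r b)"
  by (simp add: repunit_add power_add algebra_simps)

lemma repunit_less_power:
  assumes "r \<ge> 2" shows "repunit r k < r ^ k"
proof (induction k)
  case (Suc k)
  then have "r * repunit r k \<le> r * (r ^ k - 1)"
    using assms by (intro mult_left_mono) auto
  then show ?case using assms by (simp add: algebra_simps)
qed simp

fun alpha_bound :: "nat \<Rightarrow> nat \<Rightarrow> nat" where
  "alpha_bound r 0 = 1"
| "alpha_bound r (Suc k) = r * alpha_bound r k - 1"

lemma alpha_bound_pos:
  assumes "r \<ge> 2" shows "alpha_bound r k \<ge> 1"
proof (induction k)
  case (Suc k)
  then have "r * alpha_bound r k \<ge> 2" using assms by (metis mult_le_mono nat_mult_1_right)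
  then show ?case by simp
qed simp

lemma alpha_bound_Suc_plus_1:
  assumes "r \<ge> 2" shows "alpha_bound r (Suc k) + 1 = r * alpha_bound r k"
  using alpha_bound_pos[OF assms, of k] assms mult_le_mono[of 1 r 1 "alpha_bound r k"] by simp

lemma of_nat_alpha_bound_Suc:
  assumes "r \<ge> 2"
  shows "(of_nat (alpha_bound r (Suc k)) :: 'a :: comm_ring_1) = of_nat r * of_nat (alpha_bound r k) - 1"
proof -
  have "(of_nat (alpha_bound r (Suc k) + 1) :: 'a) = of_nat (r * alpha_bound r k)"
    by (simp only: alpha_bound_Suc_plus_1[OF assms])
  then show ?thesis by (simp add: eq_diff_eq ac_simps del: alpha_bound.simps)
qed

lemma int_alpha_bound:
  assumes "r \<ge> 2" shows "int (alpha_bound r k) = int r ^ k - repunit (int r) k"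
  by (induction k) (simp_all add: of_nat_alpha_bound_Suc[OF assms] right_diff_distrib del: alpha_bound.simps(2))

lemma real_alpha_bound:
  assumes "r \<ge> 2"
  shows "real (alpha_bound r k) = (1 + real r ^ k * (real r - 2)) / (real r - 1)"
proof (induction k)
  case (Suc k)
  have "real (alpha_bound r (Suc k)) = real r * real (alpha_bound r k) - 1"
    by (rule of_nat_alpha_bound_Suc[OF assms])
  also have "\<dots> = (1 + real r ^ Suc k * (real r - 2)) / (real r - 1)"
    using assms unfolding Suc by (simp add: field_simps)
  finally show ?case .
qed (use assms in simp)

definition almost_power_multiple :: "int \<Rightarrow> nat \<Rightarrow> int \<Rightarrow> bool" where
  "almost_power_multiple r k b \<longleftrightarrow> (\<exists>\<beta>. 0 \<le> \<beta> \<and> \<beta> \<le> repunit r k \<and> r ^ k dvd b + \<beta>)"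

lemma almost_power_multiple_0: "almost_power_multiple r 0 b"
  unfolding almost_power_multiple_def by (intro exI[of _ 0]) simp

lemma almost_power_multiple_Suc:
  assumes r: "r \<ge> 0" and b': "b' = r * b \<or> b' = N - r * b"
    and N: "r ^ Suc k dvd N + repunit r (Suc k)"
    and b: "almost_power_multiple r k b"
  shows "almost_power_multiple r (Suc k) b'"
proof -
  obtain \<beta> where \<beta>: "0 \<le> \<beta>" "\<beta> \<le> repunit r k" "r ^ k dvd b + \<beta>"
    using b by (auto simp: almost_power_multiple_def)
  have dvd: "r ^ Suc k dvd r * (b + \<beta>)"
    using mult_dvd_mono[OF dvd_refl \<beta>(3), of r] by simp
  have "r * \<beta> \<le> r * repunit r k" using \<beta> r by (intro mult_left_mono)
  have "0 \<le> r * \<beta>" "0 \<le> r * (repunit r k - \<beta>)" using \<beta> r by simp_all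
  show ?thesis
    unfolding almost_power_multiple_def
  proof (cases "b' = r * b")
    case True
    have "r ^ Suc k dvd b' + r * \<beta>" using dvd True by (simp add: distrib_left)
    then show "\<exists>\<beta>'. 0 \<le> \<beta>' \<and> \<beta>' \<le> repunit r (Suc k) \<and> r ^ Suc k dvd b' + \<beta>'"
      using \<beta> r \<open>r * \<beta> \<le> r * repunit r k\<close> by (intro exI[of _ "r * \<beta>"]) simp
  next
    case False
    then have "b' + (1 + r * (repunit r k - \<beta>)) = (N + repunit r (Suc k)) - r * (b + \<beta>)"
      using b' by (simp add: algebra_simps)
    also have "r ^ Suc k dvd \<dots>" using N dvd by (rule dvd_diff)
    finally show "\<exists>\<beta>'. 0 \<le> \<beta>' \<and> \<beta>' \<le> repunit r (Suc k) \<and> r ^ Suc k dvd b' + \<beta>'"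
      using \<open>0 \<le> r * \<beta>\<close> \<open>0 \<le> r * (repunit r k - \<beta>)\<close>
      by (intro exI[of _ "1 + r * (repunit r k - \<beta>)"]) (simp add: right_diff_distrib)
  qed
qed

lemma almost_power_multiple_ge:
  assumes "almost_power_multiple r k b" "b \<ge> 1" "r > 0"
  shows "r ^ k - repunit r k \<le> b"
proof -
  obtain \<beta> where "\<beta> \<le> repunit r k" "0 \<le> \<beta>" "r ^ k dvd b + \<beta>"
    using assms(1) by (auto simp: almost_power_multiple_def)
  moreover from this have "r ^ k \<le> b + \<beta>" using assms by (intro zdvd_imp_le) auto
  ultimately show ?thesis by simp
qed

lemma circ_dist_mult_step:
  fixes r d b :: int
  assumes r: "r \<ge> 2" and b: "1 \<le> b" "b < d"
  shows "circ_dist (r * d - 1) (r * b) = r * b \<or> circ_dist (r * d - 1) (r * b) = r * d - 1 - r * b"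
    and "1 \<le> circ_dist (r * d - 1) (r * b)"
proof -
  have "2 \<le> r * b" using r b by (metis mult_1_right mult_mono order.trans zero_le_one one_le_numeral)
  have "r * b \<le> r * (d - 1)" using r b by (intro mult_left_mono) auto
  then have "r * b \<le> r * d - 2" using r by (simp add: algebra_simps)
  then have "circ_dist (r * d - 1) (r * b) = min (r * b) (r * d - 1 - r * b)"
    using \<open>2 \<le> r * b\<close> by (intro circ_dist_eq_min) auto
  then show "circ_dist (r * d - 1) (r * b) = r * b \<or> circ_dist (r * d - 1) (r * b) = r * d - 1 - r * b"
    and "1 \<le> circ_dist (r * d - 1) (r * b)"
    using \<open>2 \<le> r * b\<close> \<open>r * b \<le> r * d - 2\<close> by (auto simp: min_def)
qed

lemma exists_power_mult_circ_dist_ge: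
  fixes r d z :: int
  assumes r: "r \<ge> 2" and d: "d = r ^ m - repunit r m" and z: "z mod (r * d - 1) \<noteq> 0"
  shows "\<exists>k\<le>m. d \<le> circ_dist (r * d - 1) (r ^ k * z)"
proof (rule ccontr)
  define N where "N = r * d - 1"
  define b where "b k = circ_dist N (r ^ k * z)" for k
  assume "\<not> ?thesis"
  then have near: "b k < d" if "k \<le> m" for k
    using that unfolding b_def N_def by (meson not_le)
  have "d \<ge> 1" using repunit_less_power[OF r, of m] d by simp
  then have "r * d \<ge> 2 * d" using r by (intro mult_right_mono) auto
  then have N: "N > 0" using \<open>d \<ge> 1\<close> unfolding N_def by linarith
  have "N = r ^ Suc m - repunit r (Suc m)"
    using d by (simp add: N_def right_diff_distrib)
  then have N_dvd: "r ^ Suc k dvd N + repunit r (Suc k)" if "k < m" for k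
    using power_sub_repunit_add[of r "Suc k" "m - k"] that by simp
  \<comment> \<open>While \<open>b k < d\<close>, multiplication by \<open>r\<close> acts on the circular distance as \<open>b \<mapsto> r b\<close> or
      \<open>b \<mapsto> N - r b\<close>; both preserve the invariant, which at \<open>k = m\<close> forces \<open>d \<le> b m\<close>.\<close>
  have "1 \<le> b k \<and> almost_power_multiple r k (b k)" if "k \<le> m" for k
    using that
  proof (induction k)
    case 0
    have "z mod N \<noteq> 0" using z by (simp add: N_def)
    then have "0 < z mod N" "z mod N < N"
      using pos_mod_sign[OF N, of z] pos_mod_bound[OF N, of z] by linarith+
    then have "1 \<le> b 0" by (simp add: b_def circ_dist_def)
    then show ?case by (simp add: almost_power_multiple_0)
  next
    case (Suc k)
    then have b: "1 \<le> b k" "b k < d" "almost_power_multiple r k (b k)" using near by auto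
    have "b (Suc k) = circ_dist N (r * b k)"
      using circ_dist_mult[OF N] by (simp add: b_def mult.assoc)
    then have "b (Suc k) = r * b k \<or> b (Suc k) = N - r * b k" "1 \<le> b (Suc k)"
      using circ_dist_mult_step[OF r b(1,2)] by (simp_all add: N_def)
    then show ?case
      using almost_power_multiple_Suc[of r "b (Suc k)" "b k" N k] b(3) N_dvd Suc.prems r by simp
  qed
  then have "d \<le> b m" using almost_power_multiple_ge[of r m "b m"] r d by simp
  then show False using near[of m] by simp
qed

lemma finite_strong_pow_vertices: "finite V \<Longrightarrow> finite (strong_pow_vertices V n)"
  unfolding strong_pow_vertices_def using finite_lists_length_eq[of V n] by (simp add: conj_commute)

lemma strong_pow_vertices_Suc_hd_tl:
  assumes "v \<in> strong_pow_vertices V (Suc n)"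
  shows "v = hd v # tl v" "hd v \<in> V" "tl v \<in> strong_pow_vertices V n"
  using assms by (cases v; auto simp: strong_pow_vertices_def)+

lemma strong_pow_adj_Cons:
  "strong_pow_adj E (x # xs) (y # ys) \<longleftrightarrow>
     x # xs \<noteq> y # ys \<and> (x = y \<or> E x y) \<and> (xs = ys \<or> strong_pow_adj E xs ys)"
  unfolding strong_pow_adj_def by (auto simp: less_Suc_eq_0_disj)

lemma finite_independent_set_cards:
  "finite V \<Longrightarrow> finite {card S |S. independent_set V E S}"
  by (rule finite_subset[of _ "card ` Pow V"]) (auto simp: independent_set_def)

lemma card_le_alpha: "finite V \<Longrightarrow> independent_set V E S \<Longrightarrow> card S \<le> alpha V E"
  unfolding alpha_def using finite_independent_set_cards by (intro Max_ge) auto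

lemma alpha_attained:
  assumes "finite V" obtains S where "independent_set V E S" "card S = alpha V E"
proof -
  have "independent_set V E {}" by (simp add: independent_set_def)
  then have "{card S |S. independent_set V E S} \<noteq> {}" by blast
  then have "alpha V E \<in> {card S |S. independent_set V E S}"
    unfolding alpha_def using finite_independent_set_cards[OF assms] by (rule Max_in[rotated])
  then show ?thesis using that by auto
qed

lemma alpha_strong_pow_0: "alpha (strong_pow_vertices V 0) E \<le> 1"
proof -
  have "finite (strong_pow_vertices V 0)" by (simp add: strong_pow_vertices_def)
  then obtain S where "independent_set (strong_pow_vertices V 0) E S" "card S = alpha (strong_pow_vertices V 0) E"
    by (rule alpha_attained)
  then show ?thesis
    using card_mono[of "{[]}" S] by (auto simp: independent_set_def strong_pow_vertices_def)
qed

lemma card_clique_slice_le_alpha: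
  assumes V: "finite V"
    and S: "independent_set (strong_pow_vertices V (Suc n)) (strong_pow_adj E) S"
    and K: "\<And>x y. x \<in> K \<Longrightarrow> y \<in> K \<Longrightarrow> x \<noteq> y \<Longrightarrow> E x y"
  shows "card {v \<in> S. hd v \<in> K} \<le> alpha (strong_pow_vertices V n) (strong_pow_adj E)"
proof -
  let ?T = "{v \<in> S. hd v \<in> K}"
  have vert: "v = hd v # tl v" "tl v \<in> strong_pow_vertices V n" if "v \<in> S" for v
  proof -
    have "v \<in> strong_pow_vertices V (Suc n)" using S that by (auto simp: independent_set_def)
    then show "v = hd v # tl v" "tl v \<in> strong_pow_vertices V n" by (rule strong_pow_vertices_Suc_hd_tl)+
  qed
  have apart: "\<not> (tl v = tl w \<or> strong_pow_adj E (tl v) (tl w))"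
    if "v \<in> ?T" "w \<in> ?T" "v \<noteq> w" for v w
  proof
    assume "tl v = tl w \<or> strong_pow_adj E (tl v) (tl w)"
    moreover have "hd v = hd w \<or> E (hd v) (hd w)" using K that by auto
    ultimately have "strong_pow_adj E v w"
      using that vert strong_pow_adj_Cons[of E "hd v" "tl v" "hd w" "tl w"] by auto
    then show False using S that by (auto simp: independent_set_def)
  qed
  have "inj_on tl ?T" using apart by (auto intro: inj_onI)
  moreover have "independent_set (strong_pow_vertices V n) (strong_pow_adj E) (tl ` ?T)"
    using apart vert by (auto simp: independent_set_def strong_pow_adj_def)
  ultimately show ?thesis
    using card_le_alpha[OF finite_strong_pow_vertices[OF V]] by (metis card_image)
qed

lemma alpha_strong_pow_Suc_le:
  fixes K :: "'j \<Rightarrow> 'a set"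
  assumes V: "finite V" and J: "finite J"
    and clique: "\<And>j x y. j \<in> J \<Longrightarrow> x \<in> K j \<Longrightarrow> y \<in> K j \<Longrightarrow> x \<noteq> y \<Longrightarrow> E x y"
    and cover: "\<And>x. x \<in> V \<Longrightarrow> d \<le> card {j \<in> J. x \<in> K j}"
  shows "d * alpha (strong_pow_vertices V (Suc n)) (strong_pow_adj E)
           \<le> card J * alpha (strong_pow_vertices V n) (strong_pow_adj E)"
proof -
  let ?V = "strong_pow_vertices V (Suc n)"
  obtain S where S: "independent_set ?V (strong_pow_adj E) S" "card S = alpha ?V (strong_pow_adj E)"
    using alpha_attained[OF finite_strong_pow_vertices[OF V]] .
  have "finite S" using S finite_strong_pow_vertices[OF V]
    by (auto simp: independent_set_def intro: finite_subset)
  have "d * card S = (\<Sum>v\<in>S. d)" by simp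
  also have "\<dots> \<le> (\<Sum>v\<in>S. card {j \<in> J. hd v \<in> K j})"
  proof (rule sum_mono)
    fix v assume "v \<in> S"
    then have "v \<in> ?V" using S by (auto simp: independent_set_def)
    then show "d \<le> card {j \<in> J. hd v \<in> K j}" by (intro cover strong_pow_vertices_Suc_hd_tl)
  qed
  also have "\<dots> = (\<Sum>v\<in>S. \<Sum>j\<in>J. of_bool (hd v \<in> K j))"
    using J by (simp add: Int_def)
  also have "\<dots> = (\<Sum>j\<in>J. \<Sum>v\<in>S. of_bool (hd v \<in> K j))"
    by (rule sum.swap)
  also have "\<dots> = (\<Sum>j\<in>J. card {v \<in> S. hd v \<in> K j})"
    using \<open>finite S\<close> by (simp add: Int_def)
  also have "\<dots> \<le> (\<Sum>j\<in>J. alpha (strong_pow_vertices V n) (strong_pow_adj E))"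
    using card_clique_slice_le_alpha[OF V S(1)] clique by (intro sum_mono) blast
  finally show ?thesis using S(2) by simp
qed

definition circ_arc :: "nat \<Rightarrow> nat \<Rightarrow> nat \<Rightarrow> nat set" where
  "circ_arc d q j = {x. x < q \<and> (int x - int j) mod int q < int d}"

lemma circ_arc_clique:
  assumes "x \<in> circ_arc d q j" "y \<in> circ_arc d q j" "x \<noteq> y"
  shows "circ_adj d q x y"
proof -
  define u where "u = (int x - int j) mod int q"
  define w where "w = (int y - int j) mod int q"
  have q: "x < q" "y < q" using assms by (auto simp: circ_arc_def)
  have "(u - w) mod int q = (int x - int y) mod int q"
    unfolding u_def w_def by (simp add: mod_diff_eq)
  then have "circ_dist (int q) (int x - int y) = circ_dist (int q) (u - w)"
    by (metis circ_dist_mod)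
  moreover have "0 \<le> u" "u < int q" "0 \<le> w" "w < int q" using q by (simp_all add: u_def w_def)
  moreover have "u < int d" "w < int d" using assms by (simp_all add: circ_arc_def u_def w_def)
  ultimately have "circ_dist (int q) (int x - int y) < int d"
    using circ_dist_le_abs[of "u - w" "int q"] by linarith
  then show ?thesis using circ_adj_iff_circ_dist[OF q] assms(3) by simp
qed

lemma card_circ_arcs_containing:
  assumes "x < q" "d \<le> q"
  shows "d \<le> card {j \<in> {..<q}. x \<in> circ_arc d q j}"
proof -
  define h where "h i = nat ((int x - int i) mod int q)" for i
  have h: "int (h i) = (int x - int i) mod int q" for i using assms by (simp add: h_def)
  have h_inverse: "(int x - int (h i)) mod int q = int i" if "i < q" for i
    using that by (simp add: h mod_diff_right_eq)
  have "inj_on h {..<d}"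
  proof (rule inj_onI)
    fix i i' assume "i \<in> {..<d}" "i' \<in> {..<d}" "h i = h i'"
    moreover from this have "i < q" "i' < q" using assms by auto
    ultimately have "int i = int i'" using h_inverse by metis
    then show "i = i'" by simp
  qed
  moreover have sub: "h ` {..<d} \<subseteq> {j \<in> {..<q}. x \<in> circ_arc d q j}"
  proof
    fix j assume "j \<in> h ` {..<d}"
    then obtain i where "i < d" and j: "j = h i" by blast
    then have "(int x - int j) mod int q < int d" using h_inverse[of i] assms by simp
    moreover have "int (h i) < int q" using h[of i] assms by simp
    then have "j < q" by (simp add: j)
    ultimately show "j \<in> {j \<in> {..<q}. x \<in> circ_arc d q j}"
      using assms by (simp add: circ_arc_def)
  qed
  ultimately show ?thesis
    using card_mono[OF _ sub] by (simp add: card_image)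
qed

lemma alpha_circ_pow_le_alpha_bound:
  assumes "d \<le> q" "q < r * d"
  shows "alpha_circ_pow d q n \<le> alpha_bound r n"
proof (induction n)
  case 0
  show ?case using alpha_strong_pow_0 by (simp add: alpha_circ_pow_def)
next
  case (Suc n)
  have "\<not> r \<le> 1" using assms mult_le_mono1[of r 1 d] by linarith
  then have "r \<ge> 2" by simp
  have "d * alpha_circ_pow d q (Suc n) \<le> q * alpha_circ_pow d q n"
    unfolding alpha_circ_pow_def circ_vertices_def
    using alpha_strong_pow_Suc_le[of "{0..<q}" "{..<q}" "circ_arc d q" "circ_adj d q"]
      circ_arc_clique card_circ_arcs_containing assms(1) by simp
  also have "\<dots> \<le> q * alpha_bound r n" using Suc.IH by simp
  also have "\<dots> < d * (r * alpha_bound r n)"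
    using assms(2) alpha_bound_pos[OF \<open>r \<ge> 2\<close>, of n] by (simp add: mult.assoc[symmetric] mult.commute)
  finally have "alpha_circ_pow d q (Suc n) < r * alpha_bound r n" by simp
  then show ?case by simp
qed

definition power_orbit :: "nat \<Rightarrow> nat \<Rightarrow> nat \<Rightarrow> nat \<Rightarrow> nat list" where
  "power_orbit r N n t = map (\<lambda>k. (r ^ k * t) mod N) [0..<n]"

lemma int_power_orbit_nth:
  "k < n \<Longrightarrow> int (power_orbit r N n t ! k) = (int r ^ k * int t) mod int N"
  by (simp add: power_orbit_def zmod_int)

lemma power_orbit_in_strong_pow_vertices:
  "N > 0 \<Longrightarrow> power_orbit r N n t \<in> strong_pow_vertices (circ_vertices N) n"
  by (auto simp: power_orbit_def strong_pow_vertices_def circ_vertices_def)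

lemma inj_on_power_orbit:
  assumes "n > 0" shows "inj_on (power_orbit r N n) {..<N}"
proof (rule inj_onI)
  have hd: "power_orbit r N n t ! 0 = t mod N" for t using assms by (simp add: power_orbit_def)
  fix t t' assume "t \<in> {..<N}" "t' \<in> {..<N}" "power_orbit r N n t = power_orbit r N n t'"
  then have "t mod N = t' mod N" using hd by metis
  then show "t = t'" using \<open>t \<in> {..<N}\<close> \<open>t' \<in> {..<N}\<close> by simp
qed

lemma power_orbits_not_adj:
  assumes r: "r \<ge> 2" and d: "int d = int r ^ m - repunit (int r) m" and N: "N + 1 = r * d"
    and t: "t < N" "t' < N"
  shows "\<not> strong_pow_adj (circ_adj d N) (power_orbit r N (Suc m) t) (power_orbit r N (Suc m) t')"
proof
  let ?v = "power_orbit r N (Suc m) t" and ?w = "power_orbit r N (Suc m) t'"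
  assume adj: "strong_pow_adj (circ_adj d N) ?v ?w"
  then have "t \<noteq> t'" by (auto simp: strong_pow_adj_def)
  have "int (N + 1) = int (r * d)" using N by (rule arg_cong)
  then have N': "int N = int r * int d - 1" by simp
  have "(int t - int t') mod int N \<noteq> 0"
  proof
    assume "(int t - int t') mod int N = 0"
    then have "int t mod int N = int t' mod int N" by (simp add: mod_eq_dvd_iff dvd_eq_mod_eq_0)
    then show False using t \<open>t \<noteq> t'\<close> by simp
  qed
  then obtain k where k: "k \<le> m" "int d \<le> circ_dist (int N) (int r ^ k * (int t - int t'))"
    using exists_power_mult_circ_dist_ge[OF _ d] r N' by auto
  have "(int (?v ! k) - int (?w ! k)) mod int N = (int r ^ k * (int t - int t')) mod int N"
    using k by (simp add: int_power_orbit_nth mod_diff_eq right_diff_distrib)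
  then have far: "int d \<le> circ_dist (int N) (int (?v ! k) - int (?w ! k))"
    using k by (metis circ_dist_mod)
  have "int (?v ! k) < int N" "int (?w ! k) < int N" using k t by (simp_all add: int_power_orbit_nth)
  then have "?v ! k < N" "?w ! k < N" by simp_all
  moreover have "?v ! k = ?w ! k \<or> circ_adj d N (?v ! k) (?w ! k)"
    using adj k by (simp add: strong_pow_adj_def power_orbit_def)
  moreover have "d \<ge> 1" using N t by (cases d) auto
  ultimately have "circ_dist (int N) (int (?v ! k) - int (?w ! k)) < int d"
    using circ_adj_iff_circ_dist circ_dist_0[of "int N"] by auto
  then show False using far by simp
qed

lemma alpha_bound_le_alpha_circ_pow:
  assumes r: "r \<ge> 2"
  shows "alpha_bound r (Suc m) \<le> alpha_circ_pow (alpha_bound r m) (alpha_bound r (Suc m)) (Suc m)"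
proof -
  define N where "N = alpha_bound r (Suc m)"
  define d where "d = alpha_bound r m"
  have d: "int d = int r ^ m - repunit (int r) m" using int_alpha_bound[OF r] by (simp add: d_def)
  have N: "N + 1 = r * d" unfolding N_def d_def by (rule alpha_bound_Suc_plus_1[OF r])
  have "N > 0" using alpha_bound_pos[OF r, of "Suc m"] by (simp add: N_def del: alpha_bound.simps)
  have "independent_set (strong_pow_vertices (circ_vertices N) (Suc m))
      (strong_pow_adj (circ_adj d N)) (power_orbit r N (Suc m) ` {..<N})"
    using power_orbit_in_strong_pow_vertices[OF \<open>N > 0\<close>] power_orbits_not_adj[OF r d N]
    by (auto simp: independent_set_def)
  then have "card (power_orbit r N (Suc m) ` {..<N}) \<le> alpha_circ_pow d N (Suc m)"
    unfolding alpha_circ_pow_def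
    by (rule card_le_alpha[OF finite_strong_pow_vertices, rotated]) (simp add: circ_vertices_def)
  then show ?thesis using inj_on_power_orbit[of "Suc m" r N] by (simp add: card_image N_def d_def)
qed

lemma of_nat_divide_less_iff:
  assumes "d \<ge> 1" shows "real q / real d < real r \<longleftrightarrow> q < r * d"
proof -
  have "real q / real d < real r \<longleftrightarrow> real q < real (r * d)"
    using assms by (simp add: divide_less_eq)
  then show ?thesis by (simp only: of_nat_less_iff)
qed

theorem theorem9p1:
  fixes r n :: nat
  assumes "r \<ge> 3" and "n \<ge> 1"
  shows "(\<forall>q d. d \<ge> 1 \<and> q \<ge> 2 * d \<and> real q / real d < real r \<longrightarrow>
            real (alpha_circ_pow d q n) \<le> (1 + real r ^ n * (real r - 2)) / (real r - 1))
       \<and> (\<exists>q d. d \<ge> 1 \<and> q \<ge> 2 * d \<and> real q / real d < real r \<and>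
            real (alpha_circ_pow d q n) = (1 + real r ^ n * (real r - 2)) / (real r - 1))"
proof -
  let ?bound = "(1 + real r ^ n * (real r - 2)) / (real r - 1)"
  have r: "r \<ge> 2" using assms(1) by simp
  have bound: "real (alpha_bound r n) = ?bound" by (rule real_alpha_bound[OF r])
  have upper: "real (alpha_circ_pow d q n) \<le> ?bound"
    if "d \<ge> 1" "q \<ge> 2 * d" "real q / real d < real r" for q d
  proof -
    have "alpha_circ_pow d q n \<le> alpha_bound r n"
      using alpha_circ_pow_le_alpha_bound[of d q r n] that by (simp add: of_nat_divide_less_iff)
    then show ?thesis unfolding bound[symmetric] by simp
  qed
  obtain m where n: "n = Suc m" using assms(2) by (cases n) auto
  define d where "d = alpha_bound r m"
  define q where "q = alpha_bound r n"
  have d: "d \<ge> 1" using alpha_bound_pos[OF r] by (simp add: d_def)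
  have "q + 1 = r * d" using alpha_bound_Suc_plus_1[OF r] by (simp add: n q_def d_def)
  then have q: "q \<ge> 2 * d" "q < r * d" using assms(1) d mult_le_mono1[of 3 r d] by linarith+
  have "alpha_circ_pow d q n = q"
    using alpha_circ_pow_le_alpha_bound[of d q r n] q alpha_bound_le_alpha_circ_pow[OF r, of m]
    by (simp add: n d_def q_def)
  then have exact: "real (alpha_circ_pow d q n) = ?bound" using bound by (simp add: q_def)
  have "real q / real d < real r" using of_nat_divide_less_iff[OF d] q by simp
  then show ?thesis using upper exact d q by blast
qed

end
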